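(* Let $A$ be a Frobenius algebra of dimension $n$ over a field $\mathbb{k}$ with bilinear form $B$ and Nakayama automorphism $\nu$. Let $\{e_1,\dots,e_n\}$ be a basis of $A$ and $\{e_1^\#,\dots,e_n^\#\}$ the dual basis with $B(e_i^\#,e_j)=\delta_{ij}$, and let $\Delta_0\in\mathcal{E}_A$ be the Frobenius coproduct $\Delta_0(x)=\sum_{i=1}^n xe_i\otimes e_i^\#$. Then $\mathcal{E}_A$ is generated as a left $A$-module (under $\star$) by $\Delta_0$: for every $\Delta\in\mathcal{E}_A$ there exists $a\in A$ such that $\Delta=a\star\Delta_0$.
   Context: A Frobenius algebra over a field $\mathbb{k}$ is a finite-dimensional associative unital $\mathbb{k}$-algebra $A$ with a nondegenerate bilinear form $B:A\times A\to\mathbb{k}$ with $B(ab,c)=B(a,bc)$. Its Nakayama automorphism is the algebra automorphism $\nu:A\to A$ with $B(x,y)=B(y,\nu(x))$ for all $x,y\in A$. The Frobenius space $\mathcal{E}_A$ is the $\mathbb{k}$-vector space of all $\mathbb{k}$-linear maps $\Delta:A\to A\otimes_{\mathbb{k}} A$ that are $A$-bimodule homomorphisms, where $A\otimes A$ has bimodule structure $a(x\otimes y)b=ax\otimes yb$; such a $\Delta$ is determined by $\Delta(1_A)$. The left $A$-module structure $\star$ on $\mathcal{E}_A$ is defined by: if $\Delta(1_A)=\sum_j x_j\otimes y_j$ then $a\star\Delta$ is the element of $\mathcal{E}_A$ with $(a\star\Delta)(1_A)=\sum_j x_j\otimes\nu^{-1}(a)y_j$. *)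

theory Defs
  imports Complex_Main
begin

definition lin_fun :: "('k::field \<Rightarrow> 'a::ring_1 \<Rightarrow> 'a) \<Rightarrow> ('a \<Rightarrow> 'k) \<Rightarrow> bool" where
  "lin_fun sc f \<longleftrightarrow> Vector_Spaces.linear sc (*) f"

text \<open>Tensor product A (x) A over k, realized concretely inside (A* x A*)^*:
  a tensor is the function on pairs of linear functionals (f,g); the value
  at non-linear arguments is normalised to 0.  x (x) y is (f,g) |-> f x * g y.\<close>

type_synonym ('k, 'a) tensor = "('a \<Rightarrow> 'k) \<Rightarrow> ('a \<Rightarrow> 'k) \<Rightarrow> 'k"

definition tensor :: "('k::field \<Rightarrow> 'a::ring_1 \<Rightarrow> 'a) \<Rightarrow> 'a \<Rightarrow> 'a \<Rightarrow> ('k, 'a) tensor" where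
  "tensor sc x y = (\<lambda>f g. if lin_fun sc f \<and> lin_fun sc g then f x * g y else 0)"

definition tsum :: "('k::field \<Rightarrow> 'a::ring_1 \<Rightarrow> 'a) \<Rightarrow> ('a \<times> 'a) list \<Rightarrow> ('k, 'a) tensor" where
  "tsum sc xs = (\<lambda>f g. \<Sum>p\<leftarrow>xs. tensor sc (fst p) (snd p) f g)"

definition tensor_space :: "('k::field \<Rightarrow> 'a::ring_1 \<Rightarrow> 'a) \<Rightarrow> ('k, 'a) tensor set" where
  "tensor_space sc = range (tsum sc)"

definition tadd :: "('k::field, 'a) tensor \<Rightarrow> ('k, 'a) tensor \<Rightarrow> ('k, 'a) tensor" where
  "tadd S T = (\<lambda>f g. S f g + T f g)"

definition tscale :: "'k::field \<Rightarrow> ('k, 'a) tensor \<Rightarrow> ('k, 'a) tensor" where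
  "tscale c T = (\<lambda>f g. c * T f g)"

text \<open>left action a(x (x) y) = ax (x) y\<close>
definition lmul :: "('k::field \<Rightarrow> 'a::ring_1 \<Rightarrow> 'a) \<Rightarrow> 'a \<Rightarrow> ('k, 'a) tensor \<Rightarrow> ('k, 'a) tensor" where
  "lmul sc a T = (\<lambda>f g. if lin_fun sc f \<and> lin_fun sc g then T (\<lambda>x. f (a * x)) g else 0)"

text \<open>right action (x (x) y)b = x (x) yb\<close>
definition rmul :: "('k::field \<Rightarrow> 'a::ring_1 \<Rightarrow> 'a) \<Rightarrow> ('k, 'a) tensor \<Rightarrow> 'a \<Rightarrow> ('k, 'a) tensor" where
  "rmul sc T b = (\<lambda>f g. if lin_fun sc f \<and> lin_fun sc g then T f (\<lambda>y. g (y * b)) else 0)"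

text \<open>inner action x (x) y |-> x (x) ay\<close>
definition mid :: "('k::field \<Rightarrow> 'a::ring_1 \<Rightarrow> 'a) \<Rightarrow> 'a \<Rightarrow> ('k, 'a) tensor \<Rightarrow> ('k, 'a) tensor" where
  "mid sc a T = (\<lambda>f g. if lin_fun sc f \<and> lin_fun sc g then T f (\<lambda>y. g (a * y)) else 0)"

definition frob_space :: "('k::field \<Rightarrow> 'a::ring_1 \<Rightarrow> 'a) \<Rightarrow> ('a \<Rightarrow> ('k, 'a) tensor) set" where
  "frob_space sc = {D. (\<forall>x. D x \<in> tensor_space sc)
      \<and> (\<forall>x y. D (x + y) = tadd (D x) (D y))
      \<and> (\<forall>c x. D (sc c x) = tscale c (D x))
      \<and> (\<forall>a x. D (a * x) = lmul sc a (D x))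
      \<and> (\<forall>x b. D (x * b) = rmul sc (D x) b)}"

text \<open>a \<star> D: the bimodule map with (a \<star> D)(1) = sum_j x_j (x) nu^-1(a) y_j
  where D(1) = sum_j x_j (x) y_j; as a bimodule map it sends x to x (a \<star> D)(1).\<close>
definition star :: "('k::field \<Rightarrow> 'a::ring_1 \<Rightarrow> 'a) \<Rightarrow> ('a \<Rightarrow> 'a) \<Rightarrow> 'a \<Rightarrow> ('a \<Rightarrow> ('k, 'a) tensor)
    \<Rightarrow> ('a \<Rightarrow> ('k, 'a) tensor)" where
  "star sc \<nu> a D = (\<lambda>x. lmul sc x (mid sc (inv \<nu> a) (D 1)))"

end

theory Submission
  imports Defs
begin

text \<open>A bimodule map \<open>\<Delta> : A \<rightarrow> A \<otimes> A\<close> is determined by the tensor \<open>\<Delta>(1)\<close>, which is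
  central (\<open>b \<Delta>(1) = \<Delta>(1) b\<close>), and conversely every central tensor \<open>T\<close> gives the bimodule
  map \<open>x \<mapsto> x T\<close>.  The Casimir element \<open>\<Sum>\<^sub>i e\<^sub>i \<otimes> e\<^sub>i\<^sup>#\<close> is central by associativity of \<open>B\<close>, and
  every central tensor \<open>\<Sum>\<^sub>k x\<^sub>k \<otimes> y\<^sub>k\<close> equals \<open>\<Sum>\<^sub>i e\<^sub>i \<otimes> c e\<^sub>i\<^sup>#\<close> with \<open>c = \<Sum>\<^sub>k B(1, x\<^sub>k) y\<^sub>k\<close>:
  pairing with \<open>B(e\<^sub>i\<^sup>#, -)\<close> in the first factor and using centrality to move \<open>e\<^sub>i\<^sup>#\<close> across.
  Hence every \<open>\<Delta>\<close> is \<open>\<nu>(c) \<star> \<Delta>\<^sub>0\<close>.\<close>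

lemma lin_fun_add: "lin_fun sc f \<Longrightarrow> f (x + y) = f x + f y"
  unfolding lin_fun_def by (simp add: Vector_Spaces.linear_iff)

lemma lin_fun_scale: "lin_fun sc f \<Longrightarrow> f (sc c x) = c * f x"
  unfolding lin_fun_def by (simp add: Vector_Spaces.linear_iff)

lemma lin_fun_sum: "lin_fun sc f \<Longrightarrow> f (sum h I) = (\<Sum>i\<in>I. f (h i))"
  unfolding lin_fun_def by (metis module_hom.sum module_hom_iff_linear)

lemma lin_fun_diff: "lin_fun sc f \<Longrightarrow> f (x - y) = f x - f y"
  unfolding lin_fun_def by (metis module_hom.diff module_hom_iff_linear)

abbreviation tensor_sum :: "('k::field \<Rightarrow> 'a::ring_1 \<Rightarrow> 'a) \<Rightarrow> nat \<Rightarrow> (nat \<Rightarrow> 'a) \<Rightarrow> (nat \<Rightarrow> 'a)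
    \<Rightarrow> ('k, 'a) tensor" where
  "tensor_sum sc m x y \<equiv> tsum sc (map (\<lambda>k. (x k, y k)) [0..<m])"

lemma tensor_sum_apply:
  "tensor_sum sc m x y f g =
     (if lin_fun sc f \<and> lin_fun sc g then \<Sum>k<m. f (x k) * g (y k) else 0)"
  unfolding tsum_def tensor_def
  by (auto simp: interv_sum_list_conv_sum_set_nat atLeast0LessThan)

lemma tensor_space_obtain_tensor_sum:
  assumes "T \<in> tensor_space sc"
  obtains m x y where "T = tensor_sum sc m x y"
proof -
  from assms obtain L where "T = tsum sc L"
    unfolding tensor_space_def by auto
  then show thesis
    by (intro that[where m = "length L" and x = "\<lambda>k. fst (L ! k)" and y = "\<lambda>k. snd (L ! k)"])
       (simp add: map_nth)
qed

definition central_tensor :: "('k::field \<Rightarrow> 'a::ring_1 \<Rightarrow> 'a) \<Rightarrow> ('k, 'a) tensor \<Rightarrow> bool" where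
  "central_tensor sc T \<longleftrightarrow> (\<forall>b. lmul sc b T = rmul sc T b)"

lemma frob_space_eq_lmul_one:
  assumes "D \<in> frob_space sc"
  shows "D = (\<lambda>x. lmul sc x (D 1))"
proof
  fix x
  have "D (x * 1) = lmul sc x (D 1)"
    using assms unfolding frob_space_def by blast
  then show "D x = lmul sc x (D 1)"
    by simp
qed

lemma frob_space_central_one:
  assumes "D \<in> frob_space sc"
  shows "central_tensor sc (D 1)"
  unfolding central_tensor_def
proof
  fix b
  have "D (b * 1) = lmul sc b (D 1)" "D (1 * b) = rmul sc (D 1) b"
    using assms unfolding frob_space_def by blast+
  then show "lmul sc b (D 1) = rmul sc (D 1) b"
    by simp
qed

locale k_algebra = vector_space sc for sc :: "'k::field \<Rightarrow> 'a::ring_1 \<Rightarrow> 'a" +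
  assumes scale_mult_left: "sc c (x * y) = sc c x * y"
    and scale_mult_right: "sc c (x * y) = x * sc c y"
begin

lemma lin_fun_mult_left: "lin_fun sc f \<Longrightarrow> lin_fun sc (\<lambda>z. f (a * z))"
  unfolding lin_fun_def Vector_Spaces.linear_iff
  by (simp add: distrib_left flip: scale_mult_right)

lemma lin_fun_mult_right: "lin_fun sc f \<Longrightarrow> lin_fun sc (\<lambda>z. f (z * a))"
  unfolding lin_fun_def Vector_Spaces.linear_iff
  by (simp add: distrib_right flip: scale_mult_left)

lemma lmul_lmul: "lmul sc a (lmul sc x T) = lmul sc (a * x) T"
  unfolding lmul_def by (intro ext) (simp add: lin_fun_mult_left mult.assoc)

lemma lmul_rmul_commute: "lmul sc a (rmul sc T b) = rmul sc (lmul sc a T) b"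
  unfolding lmul_def rmul_def by (intro ext) (simp add: lin_fun_mult_left lin_fun_mult_right)

lemma lmul_tensor_sum: "lmul sc a (tensor_sum sc m x y) = tensor_sum sc m (\<lambda>k. a * x k) y"
  unfolding lmul_def by (intro ext) (simp add: tensor_sum_apply lin_fun_mult_left mult.assoc)

lemma lmul_add_tensor_sum:
  "lmul sc (a + a') (tensor_sum sc m x y)
     = tadd (lmul sc a (tensor_sum sc m x y)) (lmul sc a' (tensor_sum sc m x y))"
  unfolding lmul_tensor_sum tadd_def
  by (intro ext) (simp add: tensor_sum_apply distrib_right lin_fun_add[of sc] sum.distrib)

lemma lmul_scale_tensor_sum:
  "lmul sc (sc c a) (tensor_sum sc m x y) = tscale c (lmul sc a (tensor_sum sc m x y))"
  unfolding lmul_tensor_sum tscale_def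
  by (intro ext)
     (simp add: tensor_sum_apply lin_fun_scale sum_distrib_left mult.assoc flip: scale_mult_left)

lemma lmul_central_in_frob_space:
  assumes "T \<in> tensor_space sc" and central: "central_tensor sc T"
  shows "(\<lambda>x. lmul sc x T) \<in> frob_space sc"
proof -
  obtain m x y where T: "T = tensor_sum sc m x y"
    using assms(1) by (rule tensor_space_obtain_tensor_sum)
  have "lmul sc (a * b) T = rmul sc (lmul sc a T) b" for a b
    using central unfolding central_tensor_def
    by (metis lmul_lmul lmul_rmul_commute)
  then show ?thesis
    unfolding frob_space_def
  proof (intro CollectI conjI allI)
    show "lmul sc a T \<in> tensor_space sc" for a
      unfolding T lmul_tensor_sum tensor_space_def by simp
  qed (simp_all add: T lmul_add_tensor_sum lmul_scale_tensor_sum lmul_lmul)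
qed

end

locale frobenius_dual_bases = k_algebra sc for sc :: "'k::field \<Rightarrow> 'a::ring_1 \<Rightarrow> 'a" +
  fixes B :: "'a \<Rightarrow> 'a \<Rightarrow> 'k" and n :: nat and e es :: "nat \<Rightarrow> 'a"
  assumes basis_inj: "inj_on e {..<n}"
    and basis_span: "span (e ` {..<n}) = UNIV"
    and lin_fun_B_left: "lin_fun sc (\<lambda>x. B x y)"
    and lin_fun_B_right: "lin_fun sc (\<lambda>y. B x y)"
    and B_nondeg_left: "(\<forall>y. B x y = 0) \<Longrightarrow> x = 0"
    and B_assoc: "B (a * b) c = B a (b * c)"
    and dual: "i < n \<Longrightarrow> j < n \<Longrightarrow> B (es i) (e j) = (if i = j then 1 else 0)"
begin

definition casimir :: "('k, 'a) tensor" where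
  "casimir = tensor_sum sc n e es"

lemma expand_in_basis: "y = (\<Sum>i<n. sc (B (es i) y) (e i))"
proof -
  obtain u where u: "y = (\<Sum>v\<in>e ` {..<n}. sc (u v) v)"
    using basis_span span_finite[of "e ` {..<n}"] by auto
  then have y: "y = (\<Sum>i<n. sc (u (e i)) (e i))"
    by (simp add: sum.reindex[OF basis_inj])
  have "B (es k) y = u (e k)" if "k < n" for k
  proof -
    have "B (es k) y = (\<Sum>i<n. u (e i) * B (es k) (e i))"
      by (subst y) (simp add: lin_fun_sum[OF lin_fun_B_right] lin_fun_scale[OF lin_fun_B_right])
    also have "\<dots> = (\<Sum>i<n. if i = k then u (e k) else 0)"
      by (rule sum.cong) (auto simp: dual that)
    finally show ?thesis
      using that by simp
  qed
  then show ?thesis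
    by (subst y) (auto intro!: sum.cong)
qed

lemma expand_in_dual_basis: "z = (\<Sum>j<n. sc (B z (e j)) (es j))"
proof -
  define w where "w = z - (\<Sum>j<n. sc (B z (e j)) (es j))"
  have "B w (e k) = 0" if "k < n" for k
  proof -
    have "B w (e k) = B z (e k) - (\<Sum>j<n. B z (e j) * B (es j) (e k))"
      unfolding w_def
      by (simp add: lin_fun_diff[OF lin_fun_B_left] lin_fun_sum[OF lin_fun_B_left]
          lin_fun_scale[OF lin_fun_B_left])
    also have "(\<Sum>j<n. B z (e j) * B (es j) (e k)) = (\<Sum>j<n. if j = k then B z (e k) else 0)"
      by (rule sum.cong) (auto simp: dual that)
    finally show ?thesis
      using that by simp
  qed
  then have "B w y = 0" for y
    by (subst expand_in_basis[of y])
       (simp add: lin_fun_sum[OF lin_fun_B_right] lin_fun_scale[OF lin_fun_B_right])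
  then have "w = 0"
    using B_nondeg_left by blast
  then show ?thesis
    unfolding w_def by simp
qed

lemma lin_fun_expand_basis:
  assumes "lin_fun sc f" shows "f y = (\<Sum>i<n. B (es i) y * f (e i))"
proof -
  have "f y = f (\<Sum>i<n. sc (B (es i) y) (e i))"
    by (rule arg_cong[where f = f], rule expand_in_basis)
  then show ?thesis
    by (simp add: lin_fun_sum[OF assms] lin_fun_scale[OF assms])
qed

lemma lin_fun_expand_dual_basis:
  assumes "lin_fun sc g" shows "g z = (\<Sum>j<n. B z (e j) * g (es j))"
proof -
  have "g z = g (\<Sum>j<n. sc (B z (e j)) (es j))"
    by (rule arg_cong[where f = g], rule expand_in_dual_basis)
  then show ?thesis
    by (simp add: lin_fun_sum[OF assms] lin_fun_scale[OF assms])
qed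

lemma casimir_in_tensor_space: "casimir \<in> tensor_space sc"
  unfolding casimir_def tensor_space_def by simp

lemma casimir_central: "central_tensor sc casimir"
proof -
  have commute: "(\<Sum>i<n. f (b * e i) * g (es i)) = (\<Sum>j<n. f (e j) * g (es j * b))"
    if f: "lin_fun sc f" and g: "lin_fun sc g" for f g b
  proof -
    have "(\<Sum>j<n. f (e j) * g (es j * b))
        = (\<Sum>j<n. \<Sum>i<n. f (e j) * (B (es j * b) (e i) * g (es i)))"
      by (subst lin_fun_expand_dual_basis[OF g]) (simp add: sum_distrib_left)
    also have "\<dots> = (\<Sum>i<n. \<Sum>j<n. f (e j) * (B (es j * b) (e i) * g (es i)))"
      by (rule sum.swap)
    also have "\<dots> = (\<Sum>i<n. (\<Sum>j<n. B (es j) (b * e i) * f (e j)) * g (es i))"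
      by (intro sum.cong refl) (simp add: sum_distrib_left sum_distrib_right B_assoc mult_ac)
    also have "\<dots> = (\<Sum>i<n. f (b * e i) * g (es i))"
      by (simp flip: lin_fun_expand_basis[OF f])
    finally show ?thesis ..
  qed
  show ?thesis
    unfolding central_tensor_def casimir_def lmul_def rmul_def
    by (intro allI ext) (simp add: tensor_sum_apply lin_fun_mult_left lin_fun_mult_right commute)
qed

lemma central_tensor_sum_mult_commute:
  assumes "central_tensor sc (tensor_sum sc m x y)" "lin_fun sc f" "lin_fun sc g"
  shows "(\<Sum>k<m. f (b * x k) * g (y k)) = (\<Sum>k<m. f (x k) * g (y k * b))"
proof -
  have "lmul sc b (tensor_sum sc m x y) f g = rmul sc (tensor_sum sc m x y) b f g"
    using assms(1) unfolding central_tensor_def by simp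
  then show ?thesis
    unfolding lmul_def rmul_def
    by (simp add: assms(2,3) tensor_sum_apply lin_fun_mult_left lin_fun_mult_right)
qed

lemma central_eq_mid_casimir:
  assumes "T \<in> tensor_space sc" and central: "central_tensor sc T"
  obtains c where "T = mid sc c casimir"
proof -
  obtain m x y where T: "T = tensor_sum sc m x y"
    using assms(1) by (rule tensor_space_obtain_tensor_sum)
  define c where "c = (\<Sum>k<m. sc (B 1 (x k)) (y k))"
  have "(\<Sum>k<m. f (x k) * g (y k)) = (\<Sum>i<n. f (e i) * g (c * es i))"
    if f: "lin_fun sc f" and g: "lin_fun sc g" for f g
  proof -
    have g_c: "g (c * es i) = (\<Sum>k<m. B (es i) (x k) * g (y k))" for i
    proof -
      have "g (c * es i) = (\<Sum>k<m. B 1 (x k) * g (y k * es i))"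
        unfolding c_def sum_distrib_right
        by (simp add: lin_fun_sum[OF g] lin_fun_scale[OF g] flip: scale_mult_left)
      also have "\<dots> = (\<Sum>k<m. B 1 (es i * x k) * g (y k))"
        using central_tensor_sum_mult_commute[OF central[unfolded T] lin_fun_B_right g] by simp
      finally show ?thesis
        by (simp flip: B_assoc)
    qed
    have "(\<Sum>i<n. f (e i) * g (c * es i))
        = (\<Sum>i<n. \<Sum>k<m. f (e i) * (B (es i) (x k) * g (y k)))"
      by (simp add: g_c sum_distrib_left)
    also have "\<dots> = (\<Sum>k<m. \<Sum>i<n. f (e i) * (B (es i) (x k) * g (y k)))"
      by (rule sum.swap)
    also have "\<dots> = (\<Sum>k<m. (\<Sum>i<n. B (es i) (x k) * f (e i)) * g (y k))"
      by (intro sum.cong refl) (simp add: sum_distrib_left sum_distrib_right mult_ac)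
    also have "\<dots> = (\<Sum>k<m. f (x k) * g (y k))"
      by (simp flip: lin_fun_expand_basis[OF f])
    finally show ?thesis ..
  qed
  then have "T = mid sc c casimir"
    unfolding T casimir_def mid_def
    by (intro ext) (simp add: tensor_sum_apply lin_fun_mult_left)
  then show thesis ..
qed

end

theorem theorem8:
  fixes sc :: "'k::field \<Rightarrow> 'a::ring_1 \<Rightarrow> 'a"
    and B :: "'a \<Rightarrow> 'a \<Rightarrow> 'k"
    and \<nu> :: "'a \<Rightarrow> 'a"
    and n :: nat
    and e es :: "nat \<Rightarrow> 'a"
    and D0 :: "'a \<Rightarrow> ('k, 'a) tensor"
  assumes vs: "vector_space sc"
    and alg_l: "\<And>c x y. sc c (x * y) = sc c x * y"
    and alg_r: "\<And>c x y. sc c (x * y) = x * sc c y"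
    and basis_inj: "inj_on e {..<n}"
    and basis_indep: "\<not> module.dependent sc (e ` {..<n})"
    and basis_span: "module.span sc (e ` {..<n}) = UNIV"
    and B_lin1: "\<And>y. Vector_Spaces.linear sc (*) (\<lambda>x. B x y)"
    and B_lin2: "\<And>x. Vector_Spaces.linear sc (*) (\<lambda>y. B x y)"
    and B_nondeg1: "\<And>x. (\<forall>y. B x y = 0) \<Longrightarrow> x = 0"
    and B_nondeg2: "\<And>y. (\<forall>x. B x y = 0) \<Longrightarrow> y = 0"
    and B_assoc: "\<And>a b c. B (a * b) c = B a (b * c)"
    and nu_bij: "bij \<nu>"
    and nu_lin: "Vector_Spaces.linear sc sc \<nu>"
    and nu_mult: "\<And>x y. \<nu> (x * y) = \<nu> x * \<nu> y"
    and nu_one: "\<nu> 1 = 1"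
    and nu_B: "\<And>x y. B x y = B y (\<nu> x)"
    and dual: "\<And>i j. i < n \<Longrightarrow> j < n \<Longrightarrow> B (es i) (e j) = (if i = j then 1 else 0)"
    and D0_def: "\<And>x. D0 x = tsum sc (map (\<lambda>i. (x * e i, es i)) [0..<n])"
  shows "D0 \<in> frob_space sc \<and> (\<forall>D \<in> frob_space sc. \<exists>a. D = star sc \<nu> a D0)"
proof -
  interpret frobenius_dual_bases sc B n e es
    using B_lin1 B_lin2 unfolding lin_fun_def[symmetric]
    by (intro frobenius_dual_bases.intro k_algebra.intro k_algebra_axioms.intro
        frobenius_dual_bases_axioms.intro vs alg_l alg_r basis_inj basis_span B_nondeg1 B_assoc dual)
  have D0: "D0 = (\<lambda>x. lmul sc x casimir)"
    by (intro ext) (simp add: D0_def casimir_def lmul_tensor_sum)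
  have "D0 \<in> frob_space sc"
    unfolding D0 by (rule lmul_central_in_frob_space[OF casimir_in_tensor_space casimir_central])
  moreover have "\<exists>a. D = star sc \<nu> a D0" if D: "D \<in> frob_space sc" for D
  proof -
    have "D 1 \<in> tensor_space sc"
      using D unfolding frob_space_def by simp
    then obtain c where c: "D 1 = mid sc c casimir"
      using frob_space_central_one[OF D] by (rule central_eq_mid_casimir)
    have "inv \<nu> (\<nu> c) = c"
      using nu_bij by (simp add: bij_is_inj)
    then have "D = star sc \<nu> (\<nu> c) D0"
      by (subst frob_space_eq_lmul_one[OF D]) (simp add: star_def c D0 casimir_def lmul_tensor_sum)
    then show ?thesis ..
  qed
  ultimately show ?thesis
    by blast
qed

end
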